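(* Let $a,b,c,d,e,f\in\mathbb{C}$ with $|a|=|b|=|c|=|d|=|e|=|f|=1$, and set \[\mathcal{H}(a,b,c,d,e,f):=(1+a+b+e)(1+\overline{c}+\overline{d}+\overline{f})(1+c\overline{a}+d\overline{b}+f\overline{e}).\] Then there exist complex numbers $s_1,s_2,s_3,s_4$ of modulus $1$ such that the three vectors $(1,1,1,1,1,1)$, $(1,a,b,e,s_1,s_2)$ and $(1,c,d,f,s_3,s_4)$ of $\mathbb{C}^6$ are pairwise orthogonal (with respect to the standard inner product $\langle u,v\rangle=\sum_k u_k\overline{v_k}$) if and only if both \[\mathcal{H}(a,b,c,d,e,f)=4-|1+a+b+e|^2-|1+c+d+f|^2-|1+c\overline{a}+d\overline{b}+f\overline{e}|^2\] and \[|1+a+b+e|\leq 2\] hold. *)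

theory Defs
  imports Complex_Main
begin

definition cinner :: "complex list \<Rightarrow> complex list \<Rightarrow> complex" where
  "cinner u v = (\<Sum>k<length u. u ! k * cnj (v ! k))"

definition HH :: "complex \<Rightarrow> complex \<Rightarrow> complex \<Rightarrow> complex \<Rightarrow> complex \<Rightarrow> complex \<Rightarrow> complex" where
  "HH a b c d e f = (1 + a + b + e) * (1 + cnj c + cnj d + cnj f)
      * (1 + c * cnj a + d * cnj b + f * cnj e)"

end

theory Submission
  imports Defs
begin

(* Write X = 1 + a + b + e, Y = 1 + c + d + f and Z = 1 + c cnj a + d cnj b + f cnj e, so
   that HH a b c d e f = X * cnj Y * Z.  Orthogonality of the three vectors means
     s1 + s2 = -X,   s3 + s4 = -Y,   cnj s1 * s3 + cnj s2 * s4 = -Z.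
   Necessity is a polynomial identity in the unit numbers s1, ..., s4 together with the
   triangle inequality |X| = |s1 + s2| <= 2.  For sufficiency, when |X| < 2 the first row
   s1, s2 is chosen as two distinct unit numbers summing to -X, placed symmetrically so
   that Z * cnj Y * s1 and Z * cnj Y * s2 are conjugate (possible because the identity
   makes X * cnj Y * Z real); the second row is then the Cramer solution of a 2x2 linear
   system, and the identity is precisely the statement that its entries are unimodular.
   When |X| = 2 the first row is forced, s1 = s2 = -X/2, the identity forces
   Z = -cnj X * Y / 2, and a Cauchy-Schwarz type estimate using |c| = |d| = |f| = 1 gives
   |Y| <= 2, so the second row exists as well. *)

lemma unit_cnj: fixes z :: complex assumes "cmod z = 1" shows "z * cnj z = 1"
  using complex_norm_square[of z] assms by simp

lemma real_cnj: fixes z :: complex assumes "Im z = 0" shows "cnj z = z"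
  using assms by (simp add: complex_eq_iff)

lemma norm_eq_if_sq_eq: fixes A B :: complex
  assumes "A * cnj A = B * cnj B" shows "cmod A = cmod B"
  using assms by (metis complex_norm_square norm_ge_zero of_real_eq_iff power2_eq_iff_nonneg)

lemma cinner_ones: "cinner [1,1,1,1,1,1] [1,x1,x2,x3,x4,x5] = cnj (1 + x1 + x2 + x3 + x4 + x5)"
  by (simp add: cinner_def numeral_eq_Suc lessThan_Suc)

lemma cinner_rows: "cinner [1,a,b,e,s1,s2] [1,c,d,f,s3,s4]
   = cnj ((1 + c * cnj a + d * cnj b + f * cnj e) + cnj s1 * s3 + cnj s2 * s4)"
  by (simp add: cinner_def numeral_eq_Suc lessThan_Suc mult.commute)

lemma orthogonality_iff:
  "(cinner [1,1,1,1,1,1] [1,a,b,e,s1,s2] = 0 \<and> cinner [1,1,1,1,1,1] [1,c,d,f,s3,s4] = 0 \<and>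
    cinner [1,a,b,e,s1,s2] [1,c,d,f,s3,s4] = 0)
   \<longleftrightarrow> (s1 + s2 = -(1 + a + b + e) \<and> s3 + s4 = -(1 + c + d + f) \<and>
        cnj s1 * s3 + cnj s2 * s4 = -(1 + c * cnj a + d * cnj b + f * cnj e))"
  unfolding cinner_ones unfolding cinner_rows complex_cnj_zero_iff eq_neg_iff_add_eq_0
  by (simp only: ac_simps)

definition unit_completion :: "complex \<Rightarrow> complex \<Rightarrow> complex \<Rightarrow> bool" where
  "unit_completion X Y Z \<longleftrightarrow> (\<exists>s1 s2 s3 s4. cmod s1 = 1 \<and> cmod s2 = 1 \<and> cmod s3 = 1 \<and>
     cmod s4 = 1 \<and> s1 + s2 = -X \<and> s3 + s4 = -Y \<and> cnj s1 * s3 + cnj s2 * s4 = -Z)"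

lemma necessary_conditions:
  fixes X Y Z :: complex
  assumes "unit_completion X Y Z"
  shows "X * cnj Y * Z = 4 - X * cnj X - Y * cnj Y - Z * cnj Z" and "cmod X \<le> 2"
proof -
  obtain s1 s2 s3 s4 where s: "cmod s1 = 1" "cmod s2 = 1" "cmod s3 = 1" "cmod s4 = 1"
      "s1 + s2 = -X" "s3 + s4 = -Y" "cnj s1 * s3 + cnj s2 * s4 = -Z"
    using assms unfolding unit_completion_def by blast
  have u: "s1 * cnj s1 = 1" "s2 * cnj s2 = 1" "s3 * cnj s3 = 1" "s4 * cnj s4 = 1"
    using s(1-4) by (simp_all add: unit_cnj)
  have X: "X = -(s1 + s2)" and Y: "Y = -(s3 + s4)" and Z: "Z = -(cnj s1 * s3 + cnj s2 * s4)"
    using s(5-7) by (metis minus_minus)+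
  show "X * cnj Y * Z = 4 - X * cnj X - Y * cnj Y - Z * cnj Z"
    unfolding X Y Z complex_cnj_minus complex_cnj_add complex_cnj_mult complex_cnj_cnj
    using u by algebra
  have "cmod X \<le> cmod s1 + cmod s2" unfolding X norm_minus_cancel by (rule norm_triangle_ineq)
  then show "cmod X \<le> 2" using s(1,2) by simp
qed

lemma unit_with_real_part:
  fixes x :: real assumes "\<bar>x\<bar> \<le> 1"
  obtains p where "cmod p = 1" "p + cnj p = 2 * of_real x" "\<bar>x\<bar> < 1 \<Longrightarrow> p \<noteq> cnj p"
proof
  define p where "p = Complex x (sqrt (1 - x\<^sup>2))"
  have "x\<^sup>2 \<le> 1" using assms by (simp add: abs_square_le_1)
  then show "cmod p = 1" by (simp add: p_def cmod_def)
  show "p + cnj p = 2 * of_real x" by (simp add: p_def complex_eq_iff)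
  assume "\<bar>x\<bar> < 1"
  then have "x\<^sup>2 < 1" by (simp add: abs_square_less_1)
  then show "p \<noteq> cnj p" by (simp add: p_def complex_eq_iff)
qed

lemma aligned_direction:
  fixes X w :: complex assumes "Im (w * X) = 0"
  obtains u where "cmod u = 1" "X = of_real (cmod X) * u" "Im (w * u) = 0"
proof (cases "X = 0")
  case True
  show ?thesis
  proof (cases "w = 0")
    case True
    then show ?thesis using that[of 1] \<open>X = 0\<close> by simp
  next
    case False
    have "Im (w * (cnj w / of_real (cmod w))) = 0"
      by (simp add: mult.assoc[symmetric] del: complex_cnj_divide)
    then show ?thesis using that[of "cnj w / of_real (cmod w)"] \<open>X = 0\<close> False
      by (simp add: norm_divide)
  qed
next
  case False
  have "Im (w * (X / of_real (cmod X))) = Im (w * X) / cmod X"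
    by (simp only: Im_divide_of_real[symmetric]) simp
  then show ?thesis using that[of "X / of_real (cmod X)"] False assms by (simp add: norm_divide)
qed

(* If |X| <= 2 there are unit s1, s2 with s1 + s2 = -X; taking
   them symmetric about the direction of X with w * X real makes w * s1 and w * s2
   conjugate, and they are distinct when |X| < 2. *)
lemma first_row:
  fixes X w :: complex
  assumes "cmod X \<le> 2" and "Im (w * X) = 0"
  shows "\<exists>s1 s2. cmod s1 = 1 \<and> cmod s2 = 1 \<and> s1 + s2 = -X \<and> w * s2 = cnj (w * s1)
           \<and> (cmod X < 2 \<longrightarrow> s1 \<noteq> s2)"
proof -
  obtain u where u: "cmod u = 1" "X = of_real (cmod X) * u" "Im (w * u) = 0"
    using aligned_direction[OF assms(2)] .
  have half: "\<bar>- cmod X / 2\<bar> \<le> 1" using assms(1) by simp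
  obtain p where p: "cmod p = 1" "p + cnj p = 2 * of_real (- cmod X / 2)"
      "\<bar>- cmod X / 2\<bar> < 1 \<Longrightarrow> p \<noteq> cnj p"
    using unit_with_real_part[OF half] by blast
  have "u * p + u * cnj p = -X"
    by (subst u(2)) (simp add: distrib_left[symmetric] p(2))
  moreover have "w * (u * cnj p) = cnj (w * (u * p))"
    using real_cnj[OF u(3)] by (simp add: mult.assoc[symmetric])
  moreover have "u * p \<noteq> u * cnj p" if "cmod X < 2"
    using p(3) that u(1) by auto
  ultimately show ?thesis using u(1) p(1) by (metis norm_mult complex_mod_cnj mult_1)
qed

(* Completing the second row by Cramer's rule.  For s1 <> s2 the linear system
   s3 + s4 = -Y, cnj s1 * s3 + cnj s2 * s4 = -Z has a unique solution; its entries are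
   unimodular exactly when the two numerators have the modulus of the determinant. *)
lemma second_row:
  fixes s1 s2 Y Z :: complex
  assumes "s1 \<noteq> s2"
    and "cmod (Z - Y * cnj s2) = cmod (s1 - s2)" "cmod (Y * cnj s1 - Z) = cmod (s1 - s2)"
  shows "\<exists>s3 s4. cmod s3 = 1 \<and> cmod s4 = 1 \<and> s3 + s4 = -Y \<and> cnj s1 * s3 + cnj s2 * s4 = -Z"
proof -
  define D where "D = cnj s2 - cnj s1"
  have D: "D \<noteq> 0" "cmod D = cmod (s1 - s2)"
    using assms(1) by (auto simp: D_def norm_minus_commute simp flip: complex_cnj_diff)
  define s3 where "s3 = (Z - Y * cnj s2) / D"
  define s4 where "s4 = (Y * cnj s1 - Z) / D"
  have "cmod s3 = 1" "cmod s4 = 1" using assms D by (simp_all add: s3_def s4_def norm_divide)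
  moreover have "s3 + s4 = -Y"
  proof -
    have "(Z - Y * cnj s2) + (Y * cnj s1 - Z) = -Y * D" by (simp add: D_def algebra_simps)
    moreover have "s3 + s4 = ((Z - Y * cnj s2) + (Y * cnj s1 - Z)) / D"
      by (simp only: s3_def s4_def add_divide_distrib)
    ultimately show ?thesis using D(1) by simp
  qed
  moreover have "cnj s1 * s3 + cnj s2 * s4 = -Z"
  proof -
    have "cnj s1 * (Z - Y * cnj s2) + cnj s2 * (Y * cnj s1 - Z) = -Z * D"
      by (simp add: D_def algebra_simps)
    moreover have "cnj s1 * s3 + cnj s2 * s4
        = (cnj s1 * (Z - Y * cnj s2) + cnj s2 * (Y * cnj s1 - Z)) / D"
      by (simp only: s3_def s4_def add_divide_distrib times_divide_eq_right)
    ultimately show ?thesis using D(1) by simp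
  qed
  ultimately show ?thesis by blast
qed

(* Sufficiency for |X| < 2.  The identity makes w * X real for w = Z * cnj Y, so the first
   row can be chosen with w * s1, w * s2 conjugate.  Then both Cramer numerators have
   squared modulus |Y|^2 + |Z|^2 + X * cnj Y * Z = 4 - |X|^2 = |s1 - s2|^2. *)
lemma realize_interior:
  fixes X Y Z :: complex
  assumes H: "X * cnj Y * Z = 4 - X * cnj X - Y * cnj Y - Z * cnj Z" and "cmod X < 2"
  shows "unit_completion X Y Z"
proof -
  define w where "w = Z * cnj Y"
  have "Im (w * X) = 0"
    using arg_cong[OF H, of Im] by (simp add: w_def ac_simps)
  then obtain s1 s2 where s: "cmod s1 = 1" "cmod s2 = 1" "s1 + s2 = -X"
      "w * s2 = cnj (w * s1)" "s1 \<noteq> s2"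
    using first_row assms(2) by (metis less_imp_le)
  have u1: "s1 * cnj s1 = 1" and u2: "s2 * cnj s2 = 1" using s(1,2) by (simp_all add: unit_cnj)
  have gap: "(s1 - s2) * cnj (s1 - s2) = 4 - X * cnj X"
  proof -
    have X: "X = -(s1 + s2)" using s(3) by simp
    show ?thesis unfolding X complex_cnj_diff complex_cnj_add complex_cnj_minus using u1 u2 by algebra
  qed
  have cross: "w * s1 + w * s2 = - (X * cnj Y * Z)"
  proof -
    have "w * s1 + w * s2 = w * (s1 + s2)" by (simp only: distrib_left)
    then show ?thesis using s(3) by (simp add: w_def)
  qed
  have target: "Z * cnj Z + Y * cnj Y - (w * s1 + w * s2) = (s1 - s2) * cnj (s1 - s2)"
    using H gap cross by simp
  have "cmod (Z - Y * cnj s2) = cmod (s1 - s2)"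
  proof (rule norm_eq_if_sq_eq)
    have "(Z - Y * cnj s2) * cnj (Z - Y * cnj s2)
        = Z * cnj Z + Y * cnj Y * (s2 * cnj s2) - (w * s2 + cnj (w * s2))"
      by (simp add: w_def algebra_simps)
    also have "\<dots> = (s1 - s2) * cnj (s1 - s2)" using u2 s(4) target by (simp add: add.commute)
    finally show "(Z - Y * cnj s2) * cnj (Z - Y * cnj s2) = (s1 - s2) * cnj (s1 - s2)" .
  qed
  moreover have "cmod (Y * cnj s1 - Z) = cmod (s1 - s2)"
  proof (rule norm_eq_if_sq_eq)
    have "(Y * cnj s1 - Z) * cnj (Y * cnj s1 - Z)
        = Z * cnj Z + Y * cnj Y * (s1 * cnj s1) - (w * s1 + cnj (w * s1))"
      by (simp add: w_def algebra_simps)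
    also have "\<dots> = (s1 - s2) * cnj (s1 - s2)" using u1 s(4) target by simp
    finally show "(Y * cnj s1 - Z) * cnj (Y * cnj s1 - Z) = (s1 - s2) * cnj (s1 - s2)" .
  qed
  ultimately show ?thesis unfolding unit_completion_def using second_row[OF s(5)] s(1-3) by blast
qed

(* In the boundary case |X| = 2 the identity forces Z = -cnj X * Y / 2: it says exactly
   that |Z + cnj X * Y / 2|^2 = 0. *)
lemma edge_collinear:
  fixes X Y Z :: complex
  assumes H: "X * cnj Y * Z = 4 - X * cnj X - Y * cnj Y - Z * cnj Z" and "cmod X = 2"
  shows "Z = - (cnj X * Y / 2)"
proof -
  have XX: "X * cnj X = 4" using assms(2) complex_norm_square[of X] by simp
  have H': "cnj X * Y * cnj Z = X * cnj Y * Z"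
    using arg_cong[OF H, of cnj] H by (simp add: ac_simps)
  have "(Z + cnj X * Y / 2) * cnj (Z + cnj X * Y / 2)
      = Z * cnj Z + (X * cnj Y * Z + cnj X * Y * cnj Z) / 2 + (X * cnj X) * (Y * cnj Y) / 4"
    by (simp add: algebra_simps)
  also have "\<dots> = 0" using H H' XX by (simp add: field_simps)
  finally have "Z + cnj X * Y / 2 = 0" by (simp only: mult_eq_0_iff complex_cnj_zero_iff) blast
  then show ?thesis by (simp add: eq_neg_iff_add_eq_0)
qed

lemma sum_four_sq_le: fixes p q r t :: real
  shows "(p + q + r + t)\<^sup>2 \<le> 4 * (p\<^sup>2 + q\<^sup>2 + r\<^sup>2 + t\<^sup>2)"
proof -
  have "0 \<le> (p-q)\<^sup>2 + (p-r)\<^sup>2 + (p-t)\<^sup>2 + (q-r)\<^sup>2 + (q-t)\<^sup>2 + (r-t)\<^sup>2" by simp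
  then show ?thesis by (simp add: power2_eq_square algebra_simps)
qed

lemma unit_combination_bound:
  fixes g0 g1 g2 g3 w0 w1 w2 w3 :: complex
  assumes "cmod g0 = 1" "cmod g1 = 1" "cmod g2 = 1" "cmod g3 = 1"
  shows "(cmod (g0 * w0 + g1 * w1 + g2 * w2 + g3 * w3))\<^sup>2
           \<le> 4 * ((cmod w0)\<^sup>2 + (cmod w1)\<^sup>2 + (cmod w2)\<^sup>2 + (cmod w3)\<^sup>2)"
proof -
  have "cmod (g0 * w0 + g1 * w1 + g2 * w2 + g3 * w3) \<le> cmod w0 + cmod w1 + cmod w2 + cmod w3"
    using assms by (metis norm_triangle_le norm_mult mult_1 add_mono order_refl)
  then have "(cmod (g0 * w0 + g1 * w1 + g2 * w2 + g3 * w3))\<^sup>2 \<le> (cmod w0 + cmod w1 + cmod w2 + cmod w3)\<^sup>2"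
    by (simp add: power_mono)
  also have "\<dots> \<le> 4 * ((cmod w0)\<^sup>2 + (cmod w1)\<^sup>2 + (cmod w2)\<^sup>2 + (cmod w3)\<^sup>2)"
    by (rule sum_four_sq_le)
  finally show ?thesis .
qed

(* In the boundary case the orthogonality of (1,c,d,f) to (1,1,1,1) + (cnj X / 2)(1,a,b,e),
   encoded by Z = -cnj X * Y / 2, lets one write Y as a combination of the unit entries
   1, c, d, f with coefficients of total squared modulus 1; hence |Y| <= 2.  This is the
   one place where the unimodularity of a, ..., f enters. *)
lemma edge_bound:
  fixes a b c d e f :: complex
  assumes units: "cmod a = 1" "cmod b = 1" "cmod c = 1" "cmod d = 1" "cmod e = 1" "cmod f = 1"
  defines "X \<equiv> 1 + a + b + e" and "Y \<equiv> 1 + c + d + f"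
    and "Z \<equiv> 1 + c * cnj a + d * cnj b + f * cnj e"
  assumes X2: "cmod X = 2" and col: "Z = - (cnj X * Y / 2)"
  shows "cmod Y \<le> 2"
proof -
  have XX: "X * cnj X = 4" using X2 complex_norm_square[of X] by simp
  have ua: "a * cnj a = 1" "b * cnj b = 1" "e * cnj e = 1" using units by (simp_all add: unit_cnj)
  define v0 where "v0 = 1/2 - cnj X / 4"
  define va where "va = 1/2 - cnj X * a / 4"
  define vb where "vb = 1/2 - cnj X * b / 4"
  define ve where "ve = 1/2 - cnj X * e / 4"
  have Y_combination: "Y = 1 * cnj v0 + c * cnj va + d * cnj vb + f * cnj ve"
  proof -
    have "1 * cnj v0 + c * cnj va + d * cnj vb + f * cnj ve = Y / 2 - X * Z / 4"
      by (simp add: v0_def va_def vb_def ve_def Y_def Z_def algebra_simps)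
    also have "X * Z = - 2 * Y" using XX by (simp add: col algebra_simps)
    finally show ?thesis by simp
  qed
  have "v0 * cnj v0 + va * cnj va + vb * cnj vb + ve * cnj ve
      = 1 + (X * cnj X) * (1 + a * cnj a + b * cnj b + e * cnj e) / 16
          - (cnj X * X + X * cnj X) / 8"
    by (simp add: v0_def va_def vb_def ve_def X_def field_simps)
  also have "\<dots> = 1" using XX ua by (simp add: mult.commute)
  finally have "complex_of_real ((cmod v0)\<^sup>2 + (cmod va)\<^sup>2 + (cmod vb)\<^sup>2 + (cmod ve)\<^sup>2) = 1"
    by (simp only: of_real_add complex_norm_square)
  then have unit_mass: "(cmod v0)\<^sup>2 + (cmod va)\<^sup>2 + (cmod vb)\<^sup>2 + (cmod ve)\<^sup>2 = 1"
    by (metis of_real_1 of_real_eq_iff)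
  have "(cmod Y)\<^sup>2 \<le> 2\<^sup>2"
    using unit_combination_bound[of 1 c d f "cnj v0" "cnj va" "cnj vb" "cnj ve"] units unit_mass
    by (simp add: Y_combination)
  then show ?thesis by (rule power2_le_imp_le) simp
qed

(* Sufficiency for |X| = 2: take s1 = s2 = -X/2; then the mixed condition reduces to the
   second row sum, which can be realized because |Y| <= 2. *)
lemma realize_edge:
  fixes a b c d e f :: complex
  assumes units: "cmod a = 1" "cmod b = 1" "cmod c = 1" "cmod d = 1" "cmod e = 1" "cmod f = 1"
  defines "X \<equiv> 1 + a + b + e" and "Y \<equiv> 1 + c + d + f"
    and "Z \<equiv> 1 + c * cnj a + d * cnj b + f * cnj e"
  assumes H: "X * cnj Y * Z = 4 - X * cnj X - Y * cnj Y - Z * cnj Z" and X2: "cmod X = 2"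
  shows "unit_completion X Y Z"
proof -
  have col: "Z = - (cnj X * Y / 2)" using edge_collinear[OF H X2] .
  have "cmod Y \<le> 2"
    using edge_bound[OF units] X2 col unfolding X_def Y_def Z_def by blast
  then obtain s3 s4 where s34: "cmod s3 = 1" "cmod s4 = 1" "s3 + s4 = -Y"
    using first_row[of Y 0] by auto
  define s where "s = - X / 2"
  have "cmod s = 1" using X2 by (simp add: s_def norm_divide)
  moreover have "s + s = -X" by (simp add: s_def)
  moreover have "cnj s * s3 + cnj s * s4 = -Z"
    unfolding distrib_left[symmetric] s34(3) col s_def by simp
  ultimately show ?thesis unfolding unit_completion_def using s34 by blast
qed

theorem theorem2p15:
  fixes a b c d e f :: complex
  assumes "cmod a = 1" "cmod b = 1" "cmod c = 1" "cmod d = 1" "cmod e = 1" "cmod f = 1"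
  shows "(\<exists>s1 s2 s3 s4 :: complex. cmod s1 = 1 \<and> cmod s2 = 1 \<and> cmod s3 = 1 \<and> cmod s4 = 1 \<and>
            cinner [1,1,1,1,1,1] [1,a,b,e,s1,s2] = 0 \<and>
            cinner [1,1,1,1,1,1] [1,c,d,f,s3,s4] = 0 \<and>
            cinner [1,a,b,e,s1,s2] [1,c,d,f,s3,s4] = 0)
     \<longleftrightarrow>
         (HH a b c d e f = complex_of_real (4 - (cmod (1 + a + b + e))^2 - (cmod (1 + c + d + f))^2
              - (cmod (1 + c * cnj a + d * cnj b + f * cnj e))^2)
          \<and> cmod (1 + a + b + e) \<le> 2)"
proof -
  define X where "X = 1 + a + b + e"
  define Y where "Y = 1 + c + d + f"
  define Z where "Z = 1 + c * cnj a + d * cnj b + f * cnj e"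
  have orthogonal_iff: "(\<exists>s1 s2 s3 s4 :: complex. cmod s1 = 1 \<and> cmod s2 = 1 \<and> cmod s3 = 1 \<and>
      cmod s4 = 1 \<and> cinner [1,1,1,1,1,1] [1,a,b,e,s1,s2] = 0 \<and>
      cinner [1,1,1,1,1,1] [1,c,d,f,s3,s4] = 0 \<and> cinner [1,a,b,e,s1,s2] [1,c,d,f,s3,s4] = 0)
      \<longleftrightarrow> unit_completion X Y Z"
    unfolding orthogonality_iff unit_completion_def X_def Y_def Z_def ..
  have identity_iff: "HH a b c d e f = complex_of_real (4 - (cmod X)^2 - (cmod Y)^2 - (cmod Z)^2)
      \<longleftrightarrow> X * cnj Y * Z = 4 - X * cnj X - Y * cnj Y - Z * cnj Z"
    by (simp only: HH_def X_def Y_def Z_def complex_cnj_add complex_cnj_one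
        of_real_diff of_real_numeral complex_norm_square)
  have "unit_completion X Y Z
      \<longleftrightarrow> X * cnj Y * Z = 4 - X * cnj X - Y * cnj Y - Z * cnj Z \<and> cmod X \<le> 2"
  proof
    assume "X * cnj Y * Z = 4 - X * cnj X - Y * cnj Y - Z * cnj Z \<and> cmod X \<le> 2"
    then show "unit_completion X Y Z"
      using realize_interior realize_edge[OF assms] unfolding X_def Y_def Z_def
      by (cases "cmod (1 + a + b + e) < 2") auto
  qed (use necessary_conditions in blast)
  then show ?thesis using orthogonal_iff identity_iff unfolding X_def Y_def Z_def by simp
qed

end
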